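(* Let $X$ be an Archimedean Riesz space with unit $e$ and let $N$ be a proper uniformly closed order ideal of $X$. If $V:X\to\mathbf{R}$ is normalized, monotone, unit-additive, unit-modular and $N$-invariant, then there exists a normalized capacity $\nu:\mathscr{B}(\mathcal{E}_N)\to\mathbf{R}$ such that $$\forall x\in X,\quad V(x)=\int_{\mathcal{E}_N}\langle x,\xi\rangle\,\mathrm{d}\nu(\xi).$$
   Context: A Riesz space is a real vector lattice; it is Archimedean if $0\le nx\le y$ for all $n\in\mathbf{N}$ implies $x=0$. A (strong order) unit is a nonzero $e$ such that every $x$ satisfies $-\lambda e\le x\le\lambda e$ for some $\lambda\ge0$. An order ideal is a solid vector subspace ($|x|\le|y|$, $y\in N$ imply $x\in N$). $N$ is uniformly closed if $x\in N$ whenever there are $x_n\in N$, $y>0$ and reals $\varepsilon_n\downarrow0$ with $|x_n-x|\le\varepsilon_n y$ for all $n$. $X$ carries the norm $\|x\|=\inf\{\lambda\ge0:|x|\le\lambda e\}$; $X^\star$ is its norm dual with the weak$^\star$ topology, $X^\star_+=\{\xi:\langle x,\xi\rangle\ge0\ \forall x\ge0\}$, $\Delta=\{\xi\in X^\star_+:\langle e,\xi\rangle=1\}$, $\Delta_N=\Delta\cap N^\perp$ (functionals in $\Delta$ vanishing on $N$), and $\mathcal{E}_N$ is the set of extreme points of $\Delta_N$, with relative weak$^\star$ topology and Borel $\sigma$-algebra $\mathscr{B}(\mathcal{E}_N)$. A functional $V:X\to\mathbf{R}$ is normalized if $V(\lambda e)=\lambda$ for all $\lambda\in\mathbf{R}$;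 monotone if $x\le y$ implies $V(x)\le V(y)$; unit-additive if $V(x+\lambda e)=V(x)+V(\lambda e)$ for all $x$ and $\lambda\ge0$; unit-modular if $V(x\vee\lambda e)+V(x\wedge\lambda e)=V(x)+V(\lambda e)$ for all $x$ and $\lambda\in\mathbf{R}$; $N$-invariant if $V(x)=V(y)$ whenever $x-y\in N$. A normalized capacity on a $\sigma$-algebra is a monotone set function with value $0$ at $\emptyset$ and $1$ at the whole space; the integral is the Choquet integral $\int f\,\mathrm{d}\nu=\int_0^\infty\nu(f\ge t)\,\mathrm{d}t+\int_{-\infty}^0[\nu(f\ge t)-1]\,\mathrm{d}t$. *)

theory Defs
  imports "HOL-Analysis.Analysis"
begin

text \<open>A Riesz space is modelled as a type of class {ordered_real_vector, lattice}
(a real ordered vector space whose order is a lattice).  Functionals on it are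
functions 'a => real; the space 'a => real carries the product topology
(topology of pointwise convergence), whose subspace topology on the norm dual is
the weak-star topology.\<close>

definition rabs :: "'a::{ordered_real_vector,lattice} \<Rightarrow> 'a" where
  "rabs x = sup x (- x)"

definition archimedean_riesz :: "'a::{ordered_real_vector,lattice} itself \<Rightarrow> bool" where
  "archimedean_riesz _ \<longleftrightarrow>
     (\<forall>x y::'a. (\<forall>n::nat. 0 \<le> real n *\<^sub>R x \<and> real n *\<^sub>R x \<le> y) \<longrightarrow> x = 0)"

definition strong_unit :: "'a::{ordered_real_vector,lattice} \<Rightarrow> bool" where
  "strong_unit e \<longleftrightarrow> e \<noteq> 0 \<and> (\<forall>x. \<exists>l\<ge>0. - (l *\<^sub>R e) \<le> x \<and> x \<le> l *\<^sub>R e)"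

definition order_ideal :: "'a::{ordered_real_vector,lattice} set \<Rightarrow> bool" where
  "order_ideal N \<longleftrightarrow> subspace N \<and> (\<forall>x y. rabs x \<le> rabs y \<and> y \<in> N \<longrightarrow> x \<in> N)"

definition uniformly_closed :: "'a::{ordered_real_vector,lattice} set \<Rightarrow> bool" where
  "uniformly_closed N \<longleftrightarrow>
     (\<forall>x. (\<exists>xs y (eps::nat \<Rightarrow> real). (\<forall>n. xs n \<in> N) \<and> 0 < y \<and> decseq eps \<and> eps \<longlonglongrightarrow> 0
            \<and> (\<forall>n. rabs (xs n - x) \<le> eps n *\<^sub>R y)) \<longrightarrow> x \<in> N)"

definition unit_norm :: "'a::{ordered_real_vector,lattice} \<Rightarrow> 'a \<Rightarrow> real" where
  "unit_norm e x = Inf {l. l \<ge> 0 \<and> rabs x \<le> l *\<^sub>R e}"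

definition norm_dual :: "'a::{ordered_real_vector,lattice} \<Rightarrow> ('a \<Rightarrow> real) set" where
  "norm_dual e = {\<xi>. linear \<xi> \<and> (\<exists>C. \<forall>x. \<bar>\<xi> x\<bar> \<le> C * unit_norm e x)}"

definition Delta :: "'a::{ordered_real_vector,lattice} \<Rightarrow> ('a \<Rightarrow> real) set" where
  "Delta e = {\<xi> \<in> norm_dual e. (\<forall>x\<ge>0. \<xi> x \<ge> 0) \<and> \<xi> e = 1}"

definition Delta_N :: "'a::{ordered_real_vector,lattice} \<Rightarrow> 'a set \<Rightarrow> ('a \<Rightarrow> real) set" where
  "Delta_N e N = Delta e \<inter> {\<xi>. \<forall>x\<in>N. \<xi> x = 0}"

definition extreme_points :: "('a \<Rightarrow> real) set \<Rightarrow> ('a \<Rightarrow> real) set" where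
  "extreme_points S = {\<xi> \<in> S. \<forall>a\<in>S. \<forall>b\<in>S. \<forall>t::real. 0 < t \<and> t < 1 \<and>
       \<xi> = (\<lambda>x. t * a x + (1 - t) * b x) \<longrightarrow> a = b}"

definition E_N :: "'a::{ordered_real_vector,lattice} \<Rightarrow> 'a set \<Rightarrow> ('a \<Rightarrow> real) set" where
  "E_N e N = extreme_points (Delta_N e N)"

definition borel_sub :: "('a \<Rightarrow> real) set \<Rightarrow> ('a \<Rightarrow> real) measure" where
  "borel_sub E = sigma E {U. openin (subtopology euclidean E) U}"

definition normalized_capacity :: "'b measure \<Rightarrow> ('b set \<Rightarrow> real) \<Rightarrow> bool" where
  "normalized_capacity M \<nu> \<longleftrightarrow> \<nu> {} = 0 \<and> \<nu> (space M) = 1 \<and>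
     (\<forall>A\<in>sets M. \<forall>B\<in>sets M. A \<subseteq> B \<longrightarrow> \<nu> A \<le> \<nu> B)"

definition choquet :: "'b measure \<Rightarrow> ('b set \<Rightarrow> real) \<Rightarrow> ('b \<Rightarrow> real) \<Rightarrow> real" where
  "choquet M \<nu> f = integral {0..} (\<lambda>t. \<nu> {\<omega>\<in>space M. f \<omega> \<ge> t})
     + integral {..0} (\<lambda>t. \<nu> {\<omega>\<in>space M. f \<omega> \<ge> t} - 1)"

definition V_normalized :: "'a::{ordered_real_vector,lattice} \<Rightarrow> ('a \<Rightarrow> real) \<Rightarrow> bool" where
  "V_normalized e V \<longleftrightarrow> (\<forall>l. V (l *\<^sub>R e) = l)"
definition V_monotone :: "('a::{ordered_real_vector,lattice} \<Rightarrow> real) \<Rightarrow> bool" where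
  "V_monotone V \<longleftrightarrow> (\<forall>x y. x \<le> y \<longrightarrow> V x \<le> V y)"
definition unit_additive :: "'a::{ordered_real_vector,lattice} \<Rightarrow> ('a \<Rightarrow> real) \<Rightarrow> bool" where
  "unit_additive e V \<longleftrightarrow> (\<forall>x l. l \<ge> 0 \<longrightarrow> V (x + l *\<^sub>R e) = V x + V (l *\<^sub>R e))"
definition unit_modular :: "'a::{ordered_real_vector,lattice} \<Rightarrow> ('a \<Rightarrow> real) \<Rightarrow> bool" where
  "unit_modular e V \<longleftrightarrow>
     (\<forall>x l. V (sup x (l *\<^sub>R e)) + V (inf x (l *\<^sub>R e)) = V x + V (l *\<^sub>R e))"
definition N_invariant :: "'a::{ordered_real_vector,lattice} set \<Rightarrow> ('a \<Rightarrow> real) \<Rightarrow> bool" where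
  "N_invariant N V \<longleftrightarrow> (\<forall>x y. x - y \<in> N \<longrightarrow> V x = V y)"

end

theory Submission
  imports Defs "HOL-Library.Lattice_Algebras"
begin

text \<open>
  Maximal order ideals avoiding \<open>e\<close> are prime, so quotienting by one of them gives a totally
  ordered space with unit \<open>e\<close>, i.e. a copy of \<open>\<real>\<close>; the quotient maps are unital Riesz
  homomorphisms, they are extreme points of \<open>\<Delta>\<^sub>N\<close>, and (since \<open>N\<close> is uniformly closed) they
  separate the positive elements outside \<open>N\<close> from \<open>N\<close>.

  Unit-modularity gives \<open>V (x \<and> (t + h) e) - V (x \<and> t e) = V ((x - t e)\<^sup>+ \<and> h e)\<close>, and by
  separation and \<open>N\<close>-invariance this increment only depends on the upper level set
  \<open>{\<xi> \<in> \<E>\<^sub>N. t \<le> \<xi> x}\<close>. Taking for \<open>\<nu> A\<close> the supremum of the dyadic difference quotients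
  attached to level sets inside \<open>A\<close>, the concave function \<open>t \<mapsto> V (x \<and> t e)\<close> has derivative
  \<open>\<nu> {\<xi>. t \<le> \<xi> x}\<close>, and integrating it from \<open>-\<lambda>\<close> to \<open>\<lambda>\<close> gives the Choquet integral.
\<close>

text \<open>The theory of lattice-ordered groups, with \<open>rabs\<close> as absolute value; \<open>riesz.pprt x = sup x 0\<close>.\<close>

interpretation riesz: lattice_ab_group_add_abs rabs "(+)" "0::'a::{ordered_real_vector,lattice}"
    "(-)" uminus "(\<le>)" "(<)" inf sup
  by unfold_locales (rule rabs_def)

section \<open>Lattice-ordered vector spaces\<close>

lemma scaleR_sup_distrib:
  fixes a b :: "'a::{ordered_real_vector,lattice}"
  assumes "0 \<le> c"
  shows "c *\<^sub>R sup a b = sup (c *\<^sub>R a) (c *\<^sub>R b)"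
proof (cases "c = 0")
  case False
  with assms have c: "0 < c" by simp
  let ?S = "sup (c *\<^sub>R a) (c *\<^sub>R b)"
  have "inverse c *\<^sub>R (c *\<^sub>R a) \<le> inverse c *\<^sub>R ?S" "inverse c *\<^sub>R (c *\<^sub>R b) \<le> inverse c *\<^sub>R ?S"
    using c by (intro scaleR_left_mono; simp)+
  then have "sup a b \<le> inverse c *\<^sub>R ?S"
    using c by simp
  then have "c *\<^sub>R sup a b \<le> c *\<^sub>R (inverse c *\<^sub>R ?S)"
    using c by (intro scaleR_left_mono) simp_all
  with c show ?thesis
    by (intro antisym) (simp_all add: assms scaleR_left_mono)
qed simp

lemma scaleR_inf_distrib:
  fixes a b :: "'a::{ordered_real_vector,lattice}"
  assumes "0 \<le> c"
  shows "c *\<^sub>R inf a b = inf (c *\<^sub>R a) (c *\<^sub>R b)"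
proof -
  have "c *\<^sub>R inf a b = - (c *\<^sub>R sup (- a) (- b))"
    by (simp only: riesz.inf_eq_neg_sup[of a b] scaleR_minus_right)
  also have "\<dots> = - sup (- (c *\<^sub>R a)) (- (c *\<^sub>R b))"
    by (simp add: scaleR_sup_distrib[OF assms])
  also have "\<dots> = inf (c *\<^sub>R a) (c *\<^sub>R b)"
    by (simp add: riesz.neg_sup_eq_inf)
  finally show ?thesis .
qed

lemma le_pprt [simp]: "x \<le> riesz.pprt x"
  by (simp add: riesz.pprt_def)

lemma pprt_least: "x \<le> y \<Longrightarrow> 0 \<le> y \<Longrightarrow> riesz.pprt x \<le> y"
  by (simp add: riesz.pprt_def)

lemma pprt_add_le: "riesz.pprt (x + y) \<le> riesz.pprt x + riesz.pprt y"
  by (rule pprt_least) (simp_all add: add_mono add_nonneg_nonneg)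

lemma pprt_scaleR: "0 \<le> c \<Longrightarrow> riesz.pprt (c *\<^sub>R x) = c *\<^sub>R riesz.pprt x"
  by (simp add: riesz.pprt_def scaleR_sup_distrib)

lemma pprt_le_abs: "riesz.pprt x \<le> rabs x"
  by (rule pprt_least) (simp_all add: riesz.abs_ge_self)

lemma inf_pprt_pprt_uminus: "inf (riesz.pprt x) (riesz.pprt (- x)) = 0"
proof -
  have "riesz.pprt (- x) = riesz.pprt x - x"
    using riesz.prts[of x] riesz.pprt_neg[of x] by (simp add: algebra_simps)
  then have "inf (riesz.pprt x) (riesz.pprt (- x)) = riesz.pprt x + inf 0 (- x)"
    by (simp add: riesz.add_inf_distrib_left)
  also have "inf 0 (- x) = - riesz.pprt x"
    using riesz.neg_sup_eq_inf[of x 0] by (simp add: riesz.pprt_def inf_commute)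
  finally show ?thesis by simp
qed

lemma rabs_scaleR: "rabs (c *\<^sub>R x) = \<bar>c\<bar> *\<^sub>R rabs x"
proof (cases "0 \<le> c")
  case True
  then show ?thesis by (simp add: rabs_def scaleR_sup_distrib)
next
  case False
  then have "c *\<^sub>R x = \<bar>c\<bar> *\<^sub>R (- x)" by simp
  then show ?thesis by (simp add: rabs_def scaleR_sup_distrib sup_commute)
qed

lemma inf_add_le:
  fixes a b c :: "'a::{ordered_real_vector,lattice}"
  assumes "0 \<le> a" "0 \<le> b" "0 \<le> c"
  shows "inf a (b + c) \<le> inf a b + inf a c"
proof -
  define d where "d = inf a (b + c)"
  have "d - inf a b = sup (d - a) (d - b)"
    by (simp add: riesz.add_sup_distrib_left)
  also have "\<dots> \<le> c"
  proof (rule sup_least)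
    have "d \<le> a" by (simp add: d_def)
    then show "d - a \<le> c" using assms(3) by (simp add: diff_le_eq add_increasing)
    have "d \<le> b + c" by (simp add: d_def)
    then show "d - b \<le> c" by (simp add: diff_le_eq add.commute)
  qed
  finally have "d - inf a b \<le> c" .
  moreover have "d - inf a b \<le> a"
  proof -
    have "d - inf a b \<le> d" using assms(1,2) by simp
    also have "d \<le> a" by (simp add: d_def)
    finally show ?thesis .
  qed
  ultimately have "d - inf a b \<le> inf a c" by simp
  then show ?thesis unfolding d_def by (metis diff_le_eq add.commute)
qed

lemma inf_scaleR_eq_0:
  fixes w u :: "'a::{ordered_real_vector,lattice}"
  assumes "0 \<le> w" "0 \<le> u" "inf w u = 0" "0 \<le> k"
  shows "inf w (k *\<^sub>R u) = 0"
proof (rule antisym)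
  define K where "K = max k 1"
  have "w \<le> K *\<^sub>R w"
    using scaleR_right_mono[of 1 K w] assms(1) by (simp add: K_def)
  moreover have "k *\<^sub>R u \<le> K *\<^sub>R u"
    using scaleR_right_mono[of k K u] assms(2) by (simp add: K_def)
  ultimately have "inf w (k *\<^sub>R u) \<le> inf (K *\<^sub>R w) (K *\<^sub>R u)"
    by (rule inf_mono)
  also have "\<dots> = K *\<^sub>R inf w u"
    by (rule scaleR_inf_distrib[symmetric]) (simp add: K_def)
  finally show "inf w (k *\<^sub>R u) \<le> 0"
    using assms(3) by simp
  show "0 \<le> inf w (k *\<^sub>R u)"
    by (rule le_infI[OF assms(1) scaleR_nonneg_nonneg[OF assms(4,2)]])
qed

section \<open>Order ideals\<close>

context
  fixes I :: "'a::{ordered_real_vector,lattice} set"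
  assumes I: "order_ideal I"
begin

lemma order_ideal_zero: "0 \<in> I"
  using I by (simp add: order_ideal_def subspace_0)

lemma order_ideal_add: "x \<in> I \<Longrightarrow> y \<in> I \<Longrightarrow> x + y \<in> I"
  using I by (simp add: order_ideal_def subspace_add)

lemma order_ideal_scaleR: "x \<in> I \<Longrightarrow> c *\<^sub>R x \<in> I"
  using I by (simp add: order_ideal_def subspace_scale)

lemma order_ideal_solid: "rabs x \<le> rabs y \<Longrightarrow> y \<in> I \<Longrightarrow> x \<in> I"
  using I by (auto simp: order_ideal_def)

lemma order_ideal_abs: "x \<in> I \<Longrightarrow> rabs x \<in> I"
  by (rule order_ideal_solid) simp_all

lemma order_ideal_le: "0 \<le> x \<Longrightarrow> x \<le> y \<Longrightarrow> y \<in> I \<Longrightarrow> x \<in> I"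
  by (rule order_ideal_solid) (simp_all add: order_trans[OF _ riesz.abs_ge_self])

lemma order_ideal_pprt: "x \<in> I \<Longrightarrow> riesz.pprt x \<in> I"
  by (rule order_ideal_le[OF _ pprt_le_abs order_ideal_abs]) simp_all

lemma order_ideal_le_add: "0 \<le> w \<Longrightarrow> w \<le> x + y \<Longrightarrow> x \<in> I \<Longrightarrow> y \<in> I \<Longrightarrow> w \<in> I"
  using order_ideal_le order_ideal_add by blast

end

lemma order_ideal_Union_chain:
  assumes "C \<noteq> {}" and chain: "subset.chain {I. order_ideal I} C"
  shows "order_ideal (\<Union>C)"
proof -
  from chain have ideals: "\<And>I. I \<in> C \<Longrightarrow> order_ideal I"
    by (auto simp: subset_chain_def)
  show ?thesis
    unfolding order_ideal_def
  proof (intro conjI allI impI)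
    show "subspace (\<Union>C)"
    proof (rule subspaceI)
      show "0 \<in> \<Union>C" using assms(1) ideals order_ideal_zero by blast
    next
      fix x y assume "x \<in> \<Union>C" "y \<in> \<Union>C"
      then obtain X Y where "X \<in> C" "Y \<in> C" "x \<in> X" "y \<in> Y" by blast
      moreover have "X \<subseteq> Y \<or> Y \<subseteq> X"
        using chain \<open>X \<in> C\<close> \<open>Y \<in> C\<close> by (simp add: subset_chain_def)
      ultimately show "x + y \<in> \<Union>C" using ideals order_ideal_add by blast
    next
      fix c :: real and x assume "x \<in> \<Union>C"
      then show "c *\<^sub>R x \<in> \<Union>C" using ideals order_ideal_scaleR by blast
    qed
  next
    fix x y assume "rabs x \<le> rabs y \<and> y \<in> \<Union>C"
    then show "x \<in> \<Union>C" using ideals order_ideal_solid by blast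
  qed
qed

definition adjoin_ideal :: "'a::{ordered_real_vector,lattice} set \<Rightarrow> 'a \<Rightarrow> 'a set" where
  "adjoin_ideal M v = {y. \<exists>m\<in>M. \<exists>k\<ge>0. rabs y \<le> m + k *\<^sub>R rabs v}"

context
  fixes M :: "'a::{ordered_real_vector,lattice} set"
  assumes M: "order_ideal M"
begin

lemma adjoin_ideal_add:
  assumes "x \<in> adjoin_ideal M v" "y \<in> adjoin_ideal M v"
  shows "x + y \<in> adjoin_ideal M v"
proof -
  obtain m1 k1 m2 k2 where
    1: "m1 \<in> M" "k1 \<ge> 0" "rabs x \<le> m1 + k1 *\<^sub>R rabs v" and
    2: "m2 \<in> M" "k2 \<ge> 0" "rabs y \<le> m2 + k2 *\<^sub>R rabs v"
    using assms unfolding adjoin_ideal_def by blast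
  have "rabs (x + y) \<le> (m1 + k1 *\<^sub>R rabs v) + (m2 + k2 *\<^sub>R rabs v)"
    using 1(3) 2(3) by (rule order_trans[OF riesz.abs_triangle_ineq add_mono])
  also have "\<dots> = (m1 + m2) + (k1 + k2) *\<^sub>R rabs v"
    by (simp add: algebra_simps)
  finally show ?thesis
    unfolding adjoin_ideal_def using 1 2 order_ideal_add[OF M]
    by (intro CollectI bexI[of _ "m1 + m2"] exI[of _ "k1 + k2"]) auto
qed

lemma adjoin_ideal_scaleR:
  assumes "x \<in> adjoin_ideal M v"
  shows "c *\<^sub>R x \<in> adjoin_ideal M v"
proof -
  obtain m k where mk: "m \<in> M" "k \<ge> 0" "rabs x \<le> m + k *\<^sub>R rabs v"
    using assms unfolding adjoin_ideal_def by blast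
  have "rabs (c *\<^sub>R x) = \<bar>c\<bar> *\<^sub>R rabs x"
    by (rule rabs_scaleR)
  also have "\<dots> \<le> \<bar>c\<bar> *\<^sub>R (m + k *\<^sub>R rabs v)"
    using mk(3) by (rule scaleR_left_mono) simp
  also have "\<dots> = \<bar>c\<bar> *\<^sub>R m + (\<bar>c\<bar> * k) *\<^sub>R rabs v"
    by (simp add: scaleR_add_right)
  finally show ?thesis
    unfolding adjoin_ideal_def using mk order_ideal_scaleR[OF M]
    by (intro CollectI bexI[of _ "\<bar>c\<bar> *\<^sub>R m"] exI[of _ "\<bar>c\<bar> * k"]) auto
qed

lemma order_ideal_adjoin_ideal: "order_ideal (adjoin_ideal M v)"
  unfolding order_ideal_def
proof (intro conjI allI impI)
  show "subspace (adjoin_ideal M v)"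
  proof (rule subspaceI)
    show "0 \<in> adjoin_ideal M v"
      unfolding adjoin_ideal_def using order_ideal_zero[OF M]
      by (auto intro!: bexI[of _ 0] exI[of _ 0])
  qed (simp_all add: adjoin_ideal_add adjoin_ideal_scaleR)
next
  fix x y assume "rabs x \<le> rabs y \<and> y \<in> adjoin_ideal M v"
  then show "x \<in> adjoin_ideal M v"
    unfolding adjoin_ideal_def by (auto dest: order_trans)
qed

lemma subset_adjoin_ideal: "M \<subseteq> adjoin_ideal M v"
  unfolding adjoin_ideal_def using order_ideal_abs[OF M]
  by (auto intro!: bexI[of _ "rabs _"] exI[of _ 0])

lemma mem_adjoin_ideal: "v \<in> adjoin_ideal M v"
  unfolding adjoin_ideal_def using order_ideal_zero[OF M] by (auto intro!: bexI[of _ 0] exI[of _ 1])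

end

definition maximal_ideal_avoiding :: "'a::{ordered_real_vector,lattice} \<Rightarrow> 'a set \<Rightarrow> bool" where
  "maximal_ideal_avoiding e M \<longleftrightarrow> order_ideal M \<and> e \<notin> M \<and>
     (\<forall>J. order_ideal J \<and> M \<subseteq> J \<and> e \<notin> J \<longrightarrow> J = M)"

lemma exists_maximal_ideal_avoiding:
  assumes "order_ideal I" "e \<notin> I"
  shows "\<exists>M. I \<subseteq> M \<and> maximal_ideal_avoiding e M"
proof -
  define F where "F = {J. order_ideal J \<and> I \<subseteq> J \<and> e \<notin> J}"
  have "I \<in> F" using assms by (simp add: F_def)
  then have ne: "F \<noteq> {}" by blast
  have chain: "\<Union>C \<in> F" if C: "C \<noteq> {}" "subset.chain F C" for C
  proof -
    from C(2) have chain: "subset.chain {J. order_ideal J} C" and CF: "C \<subseteq> F"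
      by (auto simp: subset_chain_def F_def)
    from C(1) chain have "order_ideal (\<Union>C)"
      by (rule order_ideal_Union_chain)
    moreover have "I \<subseteq> \<Union>C" "e \<notin> \<Union>C"
      using C(1) CF by (auto simp: F_def)
    ultimately show ?thesis by (simp add: F_def)
  qed
  obtain M where M: "M \<in> F" and max: "\<And>J. J \<in> F \<Longrightarrow> M \<subseteq> J \<Longrightarrow> J = M"
    using subset_Zorn_nonempty[OF ne chain] by blast
  have "maximal_ideal_avoiding e M"
    unfolding maximal_ideal_avoiding_def
  proof (intro conjI allI impI)
    fix J assume J: "order_ideal J \<and> M \<subseteq> J \<and> e \<notin> J"
    with M have "J \<in> F" by (auto simp: F_def)
    with J show "J = M" using max by blast
  qed (use M in \<open>simp_all add: F_def\<close>)
  with M show ?thesis by (auto simp: F_def)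
qed

lemma maximal_ideal_avoidingD:
  assumes "maximal_ideal_avoiding e M" "0 \<le> e" "v \<notin> M"
  obtains m k where "m \<in> M" "0 \<le> m" "0 \<le> k" "e \<le> m + k *\<^sub>R rabs v"
proof -
  have M: "order_ideal M"
    using assms(1) by (simp add: maximal_ideal_avoiding_def)
  have "e \<in> adjoin_ideal M v"
    using assms order_ideal_adjoin_ideal[OF M] subset_adjoin_ideal[OF M] mem_adjoin_ideal[OF M]
    unfolding maximal_ideal_avoiding_def by blast
  then obtain m k where m: "m \<in> M" "0 \<le> k" "e \<le> m + k *\<^sub>R rabs v"
    unfolding adjoin_ideal_def using assms(2) by auto
  have "e \<le> rabs m + k *\<^sub>R rabs v"
    using m(3) add_right_mono[OF riesz.abs_ge_self] by (rule order_trans)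
  then show thesis
    using that[OF order_ideal_abs[OF M m(1)] riesz.abs_ge_zero m(2)] by blast
qed

text \<open>The conclusion says that \<open>M\<close> is prime: the quotient by \<open>M\<close> is totally ordered.\<close>

lemma maximal_ideal_avoiding_prime:
  assumes max: "maximal_ideal_avoiding e M" and e: "0 \<le> e"
  shows "riesz.pprt z \<in> M \<or> riesz.pprt (- z) \<in> M"
proof (rule ccontr)
  have M: "order_ideal M" and eM: "e \<notin> M"
    using max by (simp_all add: maximal_ideal_avoiding_def)
  assume "\<not> ?thesis"
  then obtain m1 k1 m2 k2 where
    1: "m1 \<in> M" "0 \<le> m1" "0 \<le> k1" "e \<le> m1 + k1 *\<^sub>R riesz.pprt z" and
    2: "m2 \<in> M" "0 \<le> m2" "0 \<le> k2" "e \<le> m2 + k2 *\<^sub>R riesz.pprt (- z)"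
    using maximal_ideal_avoidingD[OF max e] by (metis riesz.abs_of_nonneg riesz.zero_le_pprt)
  define m where "m = m1 + m2"
  define k where "k = max k1 k2"
  have "m1 + k1 *\<^sub>R riesz.pprt z \<le> m + k *\<^sub>R riesz.pprt z"
    using 2(2) by (intro add_mono add_increasing2 scaleR_right_mono) (simp_all add: m_def k_def)
  with 1(4) have "e \<le> m + k *\<^sub>R riesz.pprt z" by (rule order_trans)
  moreover have "m2 + k2 *\<^sub>R riesz.pprt (- z) \<le> m + k *\<^sub>R riesz.pprt (- z)"
    using 1(2) by (intro add_mono add_increasing scaleR_right_mono) (simp_all add: m_def k_def)
  with 2(4) have "e \<le> m + k *\<^sub>R riesz.pprt (- z)" by (rule order_trans)
  ultimately have "e \<le> m + k *\<^sub>R inf (riesz.pprt z) (riesz.pprt (- z))"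
    using 1(3) by (simp add: riesz.add_inf_distrib_left scaleR_inf_distrib k_def)
  then have "e \<in> M"
    using order_ideal_le[OF M e] order_ideal_add[OF M 1(1) 2(1)]
    by (simp add: inf_pprt_pprt_uminus m_def)
  with eM show False ..
qed

section \<open>Real-valued Riesz homomorphisms\<close>

lemma strong_unitD: "strong_unit e \<Longrightarrow> \<exists>l\<ge>0. - (l *\<^sub>R e) \<le> x \<and> x \<le> l *\<^sub>R e"
  by (simp add: strong_unit_def)

lemma strong_unit_nonneg:
  assumes "strong_unit (e::'a::{ordered_real_vector,lattice})"
  shows "0 \<le> e"
proof -
  obtain l where l: "0 \<le> l" "- (l *\<^sub>R e) \<le> e"
    using strong_unitD[OF assms, of e] by blast
  then have "0 \<le> e - - (l *\<^sub>R e)"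
    by (simp only: diff_ge_0_iff_ge)
  then have "0 \<le> (1 + l) *\<^sub>R e"
    by (simp add: scaleR_add_left)
  with l(1) show ?thesis
    by (simp add: zero_le_scaleR_iff)
qed

lemma strong_unit_scaleR_mono: "strong_unit e \<Longrightarrow> a \<le> b \<Longrightarrow> a *\<^sub>R e \<le> b *\<^sub>R e"
  by (simp add: strong_unit_nonneg scaleR_right_mono)

definition unital_riesz_hom :: "'a::{ordered_real_vector,lattice} \<Rightarrow> ('a \<Rightarrow> real) \<Rightarrow> bool" where
  "unital_riesz_hom e \<xi> \<longleftrightarrow> linear \<xi> \<and> (\<forall>x y. \<xi> (sup x y) = max (\<xi> x) (\<xi> y)) \<and> \<xi> e = 1"

context
  fixes e :: "'a::{ordered_real_vector,lattice}" and \<xi> :: "'a \<Rightarrow> real"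
  assumes hom: "unital_riesz_hom e \<xi>"
begin

lemma unital_riesz_hom_linear: "linear \<xi>"
  using hom by (simp add: unital_riesz_hom_def)

lemma unital_riesz_hom_sup: "\<xi> (sup x y) = max (\<xi> x) (\<xi> y)"
  using hom by (simp add: unital_riesz_hom_def)

lemma unital_riesz_hom_unit: "\<xi> (c *\<^sub>R e) = c"
  using hom by (simp add: unital_riesz_hom_def linear_scale)

lemma unital_riesz_hom_inf: "\<xi> (inf x y) = min (\<xi> x) (\<xi> y)"
proof -
  have "\<xi> (inf x y) = \<xi> (- sup (- x) (- y))"
    by (simp only: riesz.inf_eq_neg_sup[of x y])
  also have "\<dots> = - max (- \<xi> x) (- \<xi> y)"
    by (simp only: unital_riesz_hom_sup linear_neg[OF unital_riesz_hom_linear])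
  finally show ?thesis by simp
qed

lemma unital_riesz_hom_pprt: "\<xi> (riesz.pprt x) = max (\<xi> x) 0"
  by (simp add: riesz.pprt_def unital_riesz_hom_sup linear_0[OF unital_riesz_hom_linear])

lemma unital_riesz_hom_abs: "\<xi> (rabs x) = \<bar>\<xi> x\<bar>"
  by (simp add: rabs_def unital_riesz_hom_sup linear_neg[OF unital_riesz_hom_linear])

lemma unital_riesz_hom_nonneg: "0 \<le> x \<Longrightarrow> 0 \<le> \<xi> x"
  using unital_riesz_hom_pprt[of x] by simp

end

locale prime_ideal =
  fixes e :: "'a::{ordered_real_vector,lattice}" and M :: "'a set"
  assumes ideal: "order_ideal M" and unit: "strong_unit e" and unit_notin: "e \<notin> M"
    and prime: "\<And>z. riesz.pprt z \<in> M \<or> riesz.pprt (- z) \<in> M"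
begin

text \<open>
  The quotient by \<open>M\<close> is a totally ordered space with unit \<open>e\<close>, and the class of \<open>x\<close> is \<open>t e\<close>
  for the \<open>t\<close> of \<open>has_quotient_value x t\<close>: \<open>x - r e\<close> is negative modulo \<open>M\<close> for \<open>r > t\<close>
  and positive for \<open>r < t\<close>.
\<close>

definition has_quotient_value :: "'a \<Rightarrow> real \<Rightarrow> bool" where
  "has_quotient_value x t \<longleftrightarrow>
     (\<forall>r>t. riesz.pprt (x - r *\<^sub>R e) \<in> M) \<and> (\<forall>r<t. riesz.pprt (r *\<^sub>R e - x) \<in> M)"

definition quotient_value :: "'a \<Rightarrow> real" where
  "quotient_value x = (THE t. has_quotient_value x t)"

lemma unit_nonneg: "0 \<le> e"
  by (rule strong_unit_nonneg[OF unit])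

lemmas scaleR_unit_mono = strong_unit_scaleR_mono[OF unit]

lemma scaleR_unit_le_ideal_imp_nonpos:
  assumes "c *\<^sub>R e \<le> w" "w \<in> M"
  shows "c \<le> 0"
proof (rule ccontr)
  assume "\<not> c \<le> 0"
  then have "e \<le> inverse c *\<^sub>R w"
    using scaleR_left_mono[OF assms(1), of "inverse c"] by simp
  then have "e \<in> M"
    using order_ideal_le[OF ideal unit_nonneg _ order_ideal_scaleR[OF ideal assms(2)]] by blast
  with unit_notin show False ..
qed

lemma has_quotient_value_unique:
  assumes "has_quotient_value x t" "has_quotient_value x t'"
  shows "t = t'"
proof -
  have False if "has_quotient_value x a" "has_quotient_value x b" "a < b" for a b
  proof -
    define r where "r = a + (b - a) / 3"
    define r' where "r' = a + 2 * (b - a) / 3"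
    have r: "a < r" "r < r'" "r' < b"
      using \<open>a < b\<close> by (simp_all add: r_def r'_def field_simps)
    have "(r' - r) *\<^sub>R e = (x - r *\<^sub>R e) + (r' *\<^sub>R e - x)"
      by (simp add: algebra_simps)
    also have "\<dots> \<le> riesz.pprt (x - r *\<^sub>R e) + riesz.pprt (r' *\<^sub>R e - x)"
      by (intro add_mono le_pprt)
    finally have "(r' - r) *\<^sub>R e \<le> riesz.pprt (x - r *\<^sub>R e) + riesz.pprt (r' *\<^sub>R e - x)" .
    moreover have "riesz.pprt (x - r *\<^sub>R e) + riesz.pprt (r' *\<^sub>R e - x) \<in> M"
      using that(1,2) r unfolding has_quotient_value_def by (intro order_ideal_add[OF ideal]) auto
    ultimately have "r' - r \<le> 0"
      by (rule scaleR_unit_le_ideal_imp_nonpos)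
    with r show False by simp
  qed
  then show ?thesis
    using assms by (metis linorder_neqE_linordered_idom)
qed

lemma lower_bound_le_quotient_value:
  assumes "- (l *\<^sub>R e) \<le> x" "riesz.pprt (x - r *\<^sub>R e) \<in> M"
  shows "- l \<le> r"
proof -
  have "(- l - r) *\<^sub>R e = - (l *\<^sub>R e) - r *\<^sub>R e"
    by (simp add: algebra_simps)
  also have "\<dots> \<le> x - r *\<^sub>R e"
    using assms(1) by (rule diff_right_mono)
  also have "\<dots> \<le> riesz.pprt (x - r *\<^sub>R e)"
    by (rule le_pprt)
  finally have "- l - r \<le> 0"
    using assms(2) by (rule scaleR_unit_le_ideal_imp_nonpos)
  then show ?thesis by simp
qed

lemma has_quotient_value_exists: "\<exists>t. has_quotient_value x t"
proof -
  obtain l where l: "- (l *\<^sub>R e) \<le> x" "x \<le> l *\<^sub>R e"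
    using strong_unitD[OF unit] by blast
  define S where "S = {r. riesz.pprt (x - r *\<^sub>R e) \<in> M}"
  have "l \<in> S"
    using l(2) order_ideal_zero[OF ideal] by (simp add: S_def)
  then have ne: "S \<noteq> {}" by blast
  have "- l \<le> r" if "r \<in> S" for r
    using lower_bound_le_quotient_value[OF l(1)] that by (simp add: S_def)
  then have bdd: "bdd_below S" by (intro bdd_belowI)
  have "has_quotient_value x (Inf S)"
    unfolding has_quotient_value_def
  proof (intro conjI allI impI)
    fix r assume "r > Inf S"
    then obtain s where s: "s \<in> S" "s < r" using cInf_lessD[OF ne] by blast
    have "riesz.pprt (x - r *\<^sub>R e) \<le> riesz.pprt (x - s *\<^sub>R e)"
      using scaleR_unit_mono[of s r] s(2) by (intro riesz.pprt_mono diff_left_mono) simp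
    then show "riesz.pprt (x - r *\<^sub>R e) \<in> M"
      using order_ideal_le[OF ideal riesz.zero_le_pprt] s(1) by (simp add: S_def)
  next
    fix r assume "r < Inf S"
    then have "r \<notin> S" using cInf_lower[OF _ bdd] by force
    then show "riesz.pprt (r *\<^sub>R e - x) \<in> M"
      using prime[of "x - r *\<^sub>R e"] by (simp add: S_def)
  qed
  then show ?thesis by blast
qed

lemma has_quotient_value_quotient_value: "has_quotient_value x (quotient_value x)"
  unfolding quotient_value_def
  using has_quotient_value_exists has_quotient_value_unique by (metis theI)

lemma quotient_value_eqI: "has_quotient_value x t \<Longrightarrow> quotient_value x = t"
  using has_quotient_value_quotient_value has_quotient_value_unique by blast

lemma has_quotient_value_add:
  assumes "has_quotient_value x a" "has_quotient_value y b"
  shows "has_quotient_value (x + y) (a + b)"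
  unfolding has_quotient_value_def
proof (intro conjI allI impI)
  fix r assume r: "r > a + b"
  define s where "s = a + (r - a - b) / 2"
  have "s > a" "r - s > b" using r by (simp_all add: s_def field_simps)
  then have "riesz.pprt (x - s *\<^sub>R e) \<in> M" "riesz.pprt (y - (r - s) *\<^sub>R e) \<in> M"
    using assms unfolding has_quotient_value_def by blast+
  moreover have "x + y - r *\<^sub>R e = (x - s *\<^sub>R e) + (y - (r - s) *\<^sub>R e)"
    by (simp add: algebra_simps)
  ultimately show "riesz.pprt (x + y - r *\<^sub>R e) \<in> M"
    using order_ideal_le_add[OF ideal riesz.zero_le_pprt pprt_add_le] by metis
next
  fix r assume r: "r < a + b"
  define s where "s = a - (a + b - r) / 2"
  have "s < a" "r - s < b" using r by (simp_all add: s_def field_simps)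
  then have "riesz.pprt (s *\<^sub>R e - x) \<in> M" "riesz.pprt ((r - s) *\<^sub>R e - y) \<in> M"
    using assms unfolding has_quotient_value_def by blast+
  moreover have "r *\<^sub>R e - (x + y) = (s *\<^sub>R e - x) + ((r - s) *\<^sub>R e - y)"
    by (simp add: algebra_simps)
  ultimately show "riesz.pprt (r *\<^sub>R e - (x + y)) \<in> M"
    using order_ideal_le_add[OF ideal riesz.zero_le_pprt pprt_add_le] by metis
qed

lemma has_quotient_value_scaleR:
  assumes "has_quotient_value x a" "0 < c"
  shows "has_quotient_value (c *\<^sub>R x) (c * a)"
  unfolding has_quotient_value_def
proof (intro conjI allI impI)
  fix r assume "r > c * a"
  then have "r / c > a" using assms(2) by (simp add: field_simps)
  then have "c *\<^sub>R riesz.pprt (x - (r / c) *\<^sub>R e) \<in> M"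
    using assms(1) order_ideal_scaleR[OF ideal] unfolding has_quotient_value_def by blast
  also have "c *\<^sub>R riesz.pprt (x - (r / c) *\<^sub>R e) = riesz.pprt (c *\<^sub>R x - r *\<^sub>R e)"
    using assms(2) by (simp add: pprt_scaleR[symmetric] scaleR_diff_right)
  finally show "riesz.pprt (c *\<^sub>R x - r *\<^sub>R e) \<in> M" .
next
  fix r assume "r < c * a"
  then have "r / c < a" using assms(2) by (simp add: field_simps)
  then have "c *\<^sub>R riesz.pprt ((r / c) *\<^sub>R e - x) \<in> M"
    using assms(1) order_ideal_scaleR[OF ideal] unfolding has_quotient_value_def by blast
  also have "c *\<^sub>R riesz.pprt ((r / c) *\<^sub>R e - x) = riesz.pprt (r *\<^sub>R e - c *\<^sub>R x)"
    using assms(2) by (simp add: pprt_scaleR[symmetric] scaleR_diff_right)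
  finally show "riesz.pprt (r *\<^sub>R e - c *\<^sub>R x) \<in> M" .
qed

lemma has_quotient_value_uminus:
  assumes "has_quotient_value x a"
  shows "has_quotient_value (- x) (- a)"
  unfolding has_quotient_value_def
proof (intro conjI allI impI)
  fix r assume "r > - a"
  then have "- r < a" by simp
  then have "riesz.pprt ((- r) *\<^sub>R e - x) \<in> M"
    using assms unfolding has_quotient_value_def by blast
  moreover have "(- r) *\<^sub>R e - x = - x - r *\<^sub>R e" by (simp add: algebra_simps)
  ultimately show "riesz.pprt (- x - r *\<^sub>R e) \<in> M" by metis
next
  fix r assume "r < - a"
  then have "- r > a" by simp
  then have "riesz.pprt (x - (- r) *\<^sub>R e) \<in> M"
    using assms unfolding has_quotient_value_def by blast
  moreover have "x - (- r) *\<^sub>R e = r *\<^sub>R e - - x" by (simp add: algebra_simps)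
  ultimately show "riesz.pprt (r *\<^sub>R e - - x) \<in> M" by metis
qed

lemma has_quotient_value_sup:
  assumes "has_quotient_value x a" "has_quotient_value y b"
  shows "has_quotient_value (sup x y) (max a b)"
  unfolding has_quotient_value_def
proof (intro conjI allI impI)
  fix r assume "r > max a b"
  then have "riesz.pprt (x - r *\<^sub>R e) \<in> M" "riesz.pprt (y - r *\<^sub>R e) \<in> M"
    using assms unfolding has_quotient_value_def by simp_all
  moreover have "riesz.pprt (sup x y - r *\<^sub>R e) \<le> riesz.pprt (x - r *\<^sub>R e) + riesz.pprt (y - r *\<^sub>R e)"
  proof (rule pprt_least)
    have "sup x y - r *\<^sub>R e = sup (x - r *\<^sub>R e) (y - r *\<^sub>R e)"
      using riesz.add_sup_distrib_right[of x y "- (r *\<^sub>R e)"] by simp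
    also have "\<dots> \<le> riesz.pprt (x - r *\<^sub>R e) + riesz.pprt (y - r *\<^sub>R e)"
      by (intro sup_least add_increasing add_increasing2 le_pprt riesz.zero_le_pprt)
    finally show "sup x y - r *\<^sub>R e \<le> riesz.pprt (x - r *\<^sub>R e) + riesz.pprt (y - r *\<^sub>R e)" .
  qed (simp add: add_nonneg_nonneg)
  ultimately show "riesz.pprt (sup x y - r *\<^sub>R e) \<in> M"
    by (intro order_ideal_le_add[OF ideal riesz.zero_le_pprt])
next
  fix r assume r: "r < max a b"
  have "riesz.pprt (r *\<^sub>R e - sup x y) \<le> riesz.pprt (r *\<^sub>R e - x)"
       "riesz.pprt (r *\<^sub>R e - sup x y) \<le> riesz.pprt (r *\<^sub>R e - y)"
    by (intro riesz.pprt_mono diff_left_mono; simp)+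
  moreover have "riesz.pprt (r *\<^sub>R e - x) \<in> M \<or> riesz.pprt (r *\<^sub>R e - y) \<in> M"
    using assms r unfolding has_quotient_value_def by (cases "r < a") simp_all
  ultimately show "riesz.pprt (r *\<^sub>R e - sup x y) \<in> M"
    using order_ideal_le[OF ideal riesz.zero_le_pprt] by blast
qed

lemma has_quotient_value_unit: "has_quotient_value e 1"
  unfolding has_quotient_value_def
proof (intro conjI allI impI)
  fix r :: real assume "r > 1"
  then have "e - r *\<^sub>R e \<le> 0" using scaleR_unit_mono[of 1 r] by simp
  then show "riesz.pprt (e - r *\<^sub>R e) \<in> M" by (simp add: order_ideal_zero[OF ideal])
next
  fix r :: real assume "r < 1"
  then have "r *\<^sub>R e - e \<le> 0" using scaleR_unit_mono[of r 1] by simp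
  then show "riesz.pprt (r *\<^sub>R e - e) \<in> M" by (simp add: order_ideal_zero[OF ideal])
qed

lemma has_quotient_value_ideal:
  assumes "m \<in> M"
  shows "has_quotient_value m 0"
  unfolding has_quotient_value_def
proof (intro conjI allI impI)
  fix r :: real assume "r > 0"
  then have "riesz.pprt (m - r *\<^sub>R e) \<le> riesz.pprt m"
    using scaleR_unit_mono[of 0 r] by (intro riesz.pprt_mono) simp
  then show "riesz.pprt (m - r *\<^sub>R e) \<in> M"
    using order_ideal_le[OF ideal riesz.zero_le_pprt _ order_ideal_pprt[OF ideal assms]] by blast
next
  fix r :: real assume "r < 0"
  then have "riesz.pprt (r *\<^sub>R e - m) \<le> riesz.pprt (- m)"
    using scaleR_unit_mono[of r 0] by (intro riesz.pprt_mono) simp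
  moreover have "- m \<in> M"
    using order_ideal_scaleR[OF ideal assms, of "- 1"] by simp
  ultimately show "riesz.pprt (r *\<^sub>R e - m) \<in> M"
    using order_ideal_le[OF ideal riesz.zero_le_pprt _ order_ideal_pprt[OF ideal]] by blast
qed

lemma quotient_value_ideal: "m \<in> M \<Longrightarrow> quotient_value m = 0"
  by (intro quotient_value_eqI has_quotient_value_ideal)

lemma unital_riesz_hom_quotient_value: "unital_riesz_hom e quotient_value"
  unfolding unital_riesz_hom_def
proof (intro conjI allI)
  note has_value = has_quotient_value_quotient_value
  show "linear quotient_value"
  proof (rule linearI)
    show "quotient_value (x + y) = quotient_value x + quotient_value y" for x y
      by (intro quotient_value_eqI has_quotient_value_add has_value)
    show "quotient_value (c *\<^sub>R x) = c *\<^sub>R quotient_value x" for c x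
    proof -
      consider "c > 0" | "c = 0" | "- c > 0" by linarith
      then show ?thesis
      proof cases
        case 1
        then show ?thesis by (simp add: quotient_value_eqI has_quotient_value_scaleR has_value)
      next
        case 2
        then show ?thesis by (simp add: quotient_value_ideal order_ideal_zero[OF ideal])
      next
        case 3
        have "has_quotient_value (- ((- c) *\<^sub>R x)) (- ((- c) * quotient_value x))"
          by (intro has_quotient_value_uminus has_quotient_value_scaleR has_value 3)
        then show ?thesis by (simp add: quotient_value_eqI)
      qed
    qed
  qed
  show "quotient_value (sup x y) = max (quotient_value x) (quotient_value y)" for x y
    by (intro quotient_value_eqI has_quotient_value_sup has_value)
  show "quotient_value e = 1"
    by (intro quotient_value_eqI has_quotient_value_unit)
qed

end

section \<open>Riesz homomorphisms as extreme points\<close>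

lemma DeltaD:
  assumes "a \<in> Delta e"
  shows "linear a" "0 \<le> x \<Longrightarrow> 0 \<le> a x" "a e = 1"
  using assms by (auto simp: Delta_def norm_dual_def)

lemma E_N_subset_Delta: "E_N e N \<subseteq> Delta e"
  by (auto simp: E_N_def extreme_points_def Delta_N_def)

lemma positive_linear_mono:
  fixes a :: "'a::{ordered_real_vector,lattice} \<Rightarrow> real"
  assumes "linear a" "\<And>x. 0 \<le> x \<Longrightarrow> 0 \<le> a x" "x \<le> y"
  shows "a x \<le> a y"
  using assms(2)[of "y - x"] assms(3) by (simp add: linear_diff[OF assms(1)])

lemma Delta_bounds:
  assumes "a \<in> Delta e" "- (l *\<^sub>R e) \<le> x" "x \<le> l *\<^sub>R e"
  shows "- l \<le> a x" "a x \<le> l"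
proof -
  note a = DeltaD[OF assms(1)]
  have "a (- (l *\<^sub>R e)) \<le> a x" "a x \<le> a (l *\<^sub>R e)"
    using assms(2,3) by (intro positive_linear_mono[OF a(1,2)]; simp)+
  then show "- l \<le> a x" "a x \<le> l"
    by (simp_all add: linear_neg[OF a(1)] linear_scale[OF a(1)] a(3))
qed

text \<open>For \<open>y = x - \<xi> x e\<close> we get \<open>\<xi> |y| = 0\<close>, hence \<open>a |y| = 0\<close> and \<open>a y = 0\<close>.\<close>

lemma Delta_eq_unital_riesz_hom:
  assumes hom: "unital_riesz_hom e \<xi>" and a: "a \<in> Delta e" and t: "0 < t"
    and dom: "\<And>x. 0 \<le> x \<Longrightarrow> t * a x \<le> \<xi> x"
  shows "a = \<xi>"
proof
  fix x
  note a' = DeltaD[OF a]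
  define y where "y = x - \<xi> x *\<^sub>R e"
  have "\<xi> y = 0"
    by (simp add: y_def linear_diff[OF unital_riesz_hom_linear[OF hom]] unital_riesz_hom_unit[OF hom])
  then have "\<xi> (rabs y) = 0" by (simp add: unital_riesz_hom_abs[OF hom])
  then have "a (rabs y) = 0"
    using dom[of "rabs y"] a'(2)[of "rabs y"] t by (simp add: mult_le_0_iff)
  moreover have "a y \<le> a (rabs y)" "a (- y) \<le> a (rabs y)"
    by (intro positive_linear_mono[OF a'(1,2)]; simp add: riesz.abs_ge_self riesz.abs_ge_minus_self)+
  ultimately have "a y = 0" by (simp add: linear_neg[OF a'(1)])
  then show "a x = \<xi> x"
    by (simp add: y_def linear_diff[OF a'(1)] linear_scale[OF a'(1)] a'(3))
qed

lemma unital_riesz_hom_in_Delta: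
  assumes unit: "strong_unit e" and hom: "unital_riesz_hom e \<xi>"
  shows "\<xi> \<in> Delta e"
proof -
  have "\<bar>\<xi> x\<bar> \<le> 1 * unit_norm e x" for x
  proof -
    obtain l where "0 \<le> l" "- (l *\<^sub>R e) \<le> x" "x \<le> l *\<^sub>R e"
      using strong_unitD[OF unit] by blast
    then have "l \<in> {l. l \<ge> 0 \<and> rabs x \<le> l *\<^sub>R e}"
      by (simp add: riesz.abs_leI minus_le_iff)
    then have ne: "{l. l \<ge> 0 \<and> rabs x \<le> l *\<^sub>R e} \<noteq> {}" by blast
    have "\<bar>\<xi> x\<bar> \<le> Inf {l. l \<ge> 0 \<and> rabs x \<le> l *\<^sub>R e}"
    proof (rule cInf_greatest[OF ne])
      fix m assume "m \<in> {l. l \<ge> 0 \<and> rabs x \<le> l *\<^sub>R e}"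
      then have "\<xi> (rabs x) \<le> \<xi> (m *\<^sub>R e)"
        using positive_linear_mono[OF unital_riesz_hom_linear[OF hom] unital_riesz_hom_nonneg[OF hom]]
        by simp
      then show "\<bar>\<xi> x\<bar> \<le> m"
        by (simp add: unital_riesz_hom_abs[OF hom] unital_riesz_hom_unit[OF hom])
    qed
    then show ?thesis by (simp add: unit_norm_def)
  qed
  then show ?thesis
    using hom unital_riesz_hom_nonneg[OF hom]
    by (auto simp: Delta_def norm_dual_def unital_riesz_hom_def intro!: exI[of _ 1])
qed

lemma unital_riesz_hom_in_E_N:
  assumes unit: "strong_unit e" and hom: "unital_riesz_hom e \<xi>" and N: "\<forall>x\<in>N. \<xi> x = 0"
  shows "\<xi> \<in> E_N e N"
  unfolding E_N_def extreme_points_def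
proof (intro CollectI conjI ballI allI impI)
  show "\<xi> \<in> Delta_N e N"
    using unital_riesz_hom_in_Delta[OF unit hom] N by (simp add: Delta_N_def)
  fix a b t assume "a \<in> Delta_N e N" "b \<in> Delta_N e N"
    and t: "0 < t \<and> t < 1 \<and> \<xi> = (\<lambda>x. t * a x + (1 - t) * b x)"
  then have a: "a \<in> Delta e" and b: "b \<in> Delta e" by (simp_all add: Delta_N_def)
  have "a = \<xi>"
    using t DeltaD(2)[OF b] by (intro Delta_eq_unital_riesz_hom[OF hom a, of t]) auto
  moreover have "b = \<xi>"
    using t DeltaD(2)[OF a] by (intro Delta_eq_unital_riesz_hom[OF hom b, of "1 - t"]) auto
  ultimately show "a = b" by simp
qed

section \<open>Separating elements of a uniformly closed ideal\<close>

text \<open>\<open>(z - \<epsilon> e)\<^sup>+\<close> converges \<open>e\<close>-uniformly to \<open>z\<close> as \<open>\<epsilon> \<rightarrow> 0\<close>.\<close>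

lemma uniformly_closed_pprt_diff_unit:
  assumes unit: "strong_unit e" and uc: "uniformly_closed N"
    and z: "0 \<le> z" "z \<notin> N"
  shows "\<exists>\<epsilon>>0. riesz.pprt (z - \<epsilon> *\<^sub>R e) \<notin> N"
proof (rule ccontr)
  assume "\<not> ?thesis"
  then have inN: "riesz.pprt (z - \<epsilon> *\<^sub>R e) \<in> N" if "\<epsilon> > 0" for \<epsilon>
    using that by blast
  have e: "0 \<le> e" by (rule strong_unit_nonneg[OF unit])
  define eps where "eps n = inverse (real (Suc n))" for n
  have "z \<in> N"
  proof (rule uc[unfolded uniformly_closed_def, rule_format], intro exI conjI allI)
    show "riesz.pprt (z - eps n *\<^sub>R e) \<in> N" for n
      by (rule inN) (simp add: eps_def)
    show "0 < e"
      using e unit by (simp add: strong_unit_def order.strict_iff_order)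
    show "decseq eps"
      unfolding eps_def by (intro decseq_SucI) (simp add: field_simps)
    show "eps \<longlonglongrightarrow> 0"
      unfolding eps_def by (rule LIMSEQ_inverse_real_of_nat)
    fix n
    have ee: "0 \<le> eps n *\<^sub>R e"
      using e by (intro scaleR_nonneg_nonneg) (simp_all add: eps_def)
    show "rabs (riesz.pprt (z - eps n *\<^sub>R e) - z) \<le> eps n *\<^sub>R e"
    proof (rule riesz.abs_leI)
      have "riesz.pprt (z - eps n *\<^sub>R e) \<le> z"
        using z(1) ee by (intro pprt_least) simp_all
      then have "riesz.pprt (z - eps n *\<^sub>R e) \<le> z + eps n *\<^sub>R e"
        by (rule add_increasing2[OF ee])
      then show "riesz.pprt (z - eps n *\<^sub>R e) - z \<le> eps n *\<^sub>R e"
        by (simp add: diff_le_eq add.commute)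
      have "z - eps n *\<^sub>R e \<le> riesz.pprt (z - eps n *\<^sub>R e)"
        by (rule le_pprt)
      then show "- (riesz.pprt (z - eps n *\<^sub>R e) - z) \<le> eps n *\<^sub>R e"
        by (metis add.commute diff_le_eq minus_diff_eq)
    qed
  qed
  with z(2) show False ..
qed

text \<open>
  If \<open>e \<le> n + k u\<close> with \<open>n \<in> N\<close>, then by the Riesz decomposition \<open>w \<and> e \<le> |n| + w \<and> k u = |n|\<close>,
  so \<open>w \<and> e \<in> N\<close>; but \<open>w \<le> L (w \<and> e)\<close> for \<open>w \<le> L e\<close>, \<open>L \<ge> 1\<close>.
\<close>

lemma unit_notin_adjoin_ideal:
  assumes unit: "strong_unit e" and N: "order_ideal N"
    and w: "0 \<le> w" "w \<notin> N" and u: "0 \<le> u" and disj: "inf w u = 0"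
  shows "e \<notin> adjoin_ideal N u"
proof
  assume "e \<in> adjoin_ideal N u"
  then obtain n k where nk: "n \<in> N" "0 \<le> k" "rabs e \<le> n + k *\<^sub>R rabs u"
    unfolding adjoin_ideal_def by blast
  have e: "0 \<le> e" by (rule strong_unit_nonneg[OF unit])
  have "e \<le> n + k *\<^sub>R u"
    using nk(3) e u by simp
  also have "\<dots> \<le> rabs n + k *\<^sub>R u"
    by (rule add_right_mono[OF riesz.abs_ge_self])
  finally have "inf w e \<le> inf w (rabs n + k *\<^sub>R u)"
    by (simp add: le_infI2)
  also have "\<dots> \<le> inf w (rabs n) + inf w (k *\<^sub>R u)"
    using w(1) u nk(2) by (intro inf_add_le) (simp_all add: scaleR_nonneg_nonneg)
  also have "\<dots> \<le> rabs n"
    using inf_scaleR_eq_0[OF w(1) u disj nk(2)] by simp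
  finally have weN: "inf w e \<in> N"
    using order_ideal_le[OF N _ _ order_ideal_abs[OF N nk(1)]] w(1) e by simp
  obtain l where l: "0 \<le> l" "w \<le> l *\<^sub>R e"
    using strong_unitD[OF unit] by blast
  define L where "L = max l 1"
  have "w \<le> L *\<^sub>R w"
    using scaleR_right_mono[of 1 L w] w(1) by (simp add: L_def)
  moreover have "w \<le> L *\<^sub>R e"
    using l(2) scaleR_right_mono[of l L e] e by (simp add: L_def)
  ultimately have "w \<le> inf (L *\<^sub>R w) (L *\<^sub>R e)" by simp
  also have "\<dots> = L *\<^sub>R inf w e"
    by (rule scaleR_inf_distrib[symmetric]) (simp add: L_def)
  finally have "w \<in> N"
    using order_ideal_le[OF N w(1) _ order_ideal_scaleR[OF N weN]] by blast
  with w(2) show False ..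
qed

lemma exists_unital_riesz_hom_positive:
  assumes unit: "strong_unit e" and N: "order_ideal N" and uc: "uniformly_closed N"
    and z: "0 \<le> z" "z \<notin> N"
  shows "\<exists>\<xi>\<in>E_N e N. unital_riesz_hom e \<xi> \<and> 0 < \<xi> z"
proof -
  have e: "0 \<le> e" by (rule strong_unit_nonneg[OF unit])
  obtain \<epsilon> where \<epsilon>: "0 < \<epsilon>" "riesz.pprt (z - \<epsilon> *\<^sub>R e) \<notin> N"
    using uniformly_closed_pprt_diff_unit[OF unit uc z] by blast
  define u where "u = riesz.pprt (- (z - \<epsilon> *\<^sub>R e))"
  have "e \<notin> adjoin_ideal N u"
    unfolding u_def by (rule unit_notin_adjoin_ideal[OF unit N _ \<epsilon>(2) _ inf_pprt_pprt_uminus]) simp_all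
  then obtain M where M: "adjoin_ideal N u \<subseteq> M" "maximal_ideal_avoiding e M"
    using exists_maximal_ideal_avoiding[OF order_ideal_adjoin_ideal[OF N]] by blast
  then interpret prime_ideal e M
    using unit e maximal_ideal_avoiding_prime by unfold_locales (auto simp: maximal_ideal_avoiding_def)
  have hom: "unital_riesz_hom e quotient_value"
    by (rule unital_riesz_hom_quotient_value)
  have "N \<subseteq> M" "u \<in> M"
    using M(1) subset_adjoin_ideal[OF N] mem_adjoin_ideal[OF N] by blast+
  then have vanish: "\<forall>x\<in>N. quotient_value x = 0" and "quotient_value u = 0"
    using quotient_value_ideal by blast+
  moreover have "quotient_value u = max (\<epsilon> - quotient_value z) 0"
    by (simp add: u_def unital_riesz_hom_pprt[OF hom] linear_neg[OF unital_riesz_hom_linear[OF hom]]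
        linear_diff[OF unital_riesz_hom_linear[OF hom]] unital_riesz_hom_unit[OF hom])
  ultimately have "0 < quotient_value z"
    using \<epsilon>(1) by linarith
  then show ?thesis
    using unital_riesz_hom_in_E_N[OF unit hom vanish] hom by blast
qed

lemma uniformly_closed_ideal_memI:
  assumes "strong_unit e" "order_ideal N" "uniformly_closed N" "0 \<le> w"
    and "\<And>\<xi>. \<xi> \<in> E_N e N \<Longrightarrow> unital_riesz_hom e \<xi> \<Longrightarrow> \<xi> w \<le> 0"
  shows "w \<in> N"
  using exists_unital_riesz_hom_positive[OF assms(1-4)] assms(5) by force

section \<open>Integrals of antitone functions\<close>

lemma antimono_integrable_on:
  fixes g :: "real \<Rightarrow> real"
  assumes "antimono g"
  shows "g integrable_on {a..b}"
proof -
  have "mono_on {a..b} (\<lambda>t. - g t)"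
    using assms by (intro mono_onI) (simp add: antimonoD)
  then have "(\<lambda>t. - g t) integrable_on {a..b}"
    by (rule integrable_on_mono_on)
  then show ?thesis
    using integrable_neg[of "\<lambda>t. - g t"] by simp
qed

lemma antimono_integral_bounds:
  fixes g :: "real \<Rightarrow> real"
  assumes "antimono g" "0 \<le> \<delta>"
  shows "\<delta> * g (c + \<delta>) \<le> integral {c..c + \<delta>} g" "integral {c..c + \<delta>} g \<le> \<delta> * g c"
proof -
  have g: "g integrable_on {c..c + \<delta>}"
    by (rule antimono_integrable_on[OF assms(1)])
  have "integral {c..c + \<delta>} (\<lambda>_. g (c + \<delta>)) \<le> integral {c..c + \<delta>} g"
    by (rule integral_le[OF _ g]) (auto intro: antimonoD[OF assms(1)])
  then show "\<delta> * g (c + \<delta>) \<le> integral {c..c + \<delta>} g"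
    using assms(2) by simp
  have "integral {c..c + \<delta>} g \<le> integral {c..c + \<delta>} (\<lambda>_. g c)"
    by (rule integral_le[OF g]) (auto intro: antimonoD[OF assms(1)])
  then show "integral {c..c + \<delta>} g \<le> \<delta> * g c"
    using assms(2) by simp
qed

lemma bracketed_increment_integral_error:
  fixes g F :: "real \<Rightarrow> real"
  assumes g: "antimono g" and \<delta>: "0 < \<delta>"
    and lower: "\<And>c. \<delta> * g (c + \<delta>) \<le> F (c + \<delta>) - F c"
    and upper: "\<And>c. F (c + \<delta>) - F c \<le> \<delta> * g c"
  shows "\<bar>F (a + real k * \<delta>) - F a - integral {a..a + real k * \<delta>} g\<bar> \<le> \<delta> * (g a - g (a + real k * \<delta>))"
proof (induction k)
  case (Suc k)
  define c where "c = a + real k * \<delta>"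
  have c: "a + real (Suc k) * \<delta> = c + \<delta>" "a \<le> c"
    using \<delta> by (simp_all add: c_def algebra_simps)
  have "integral {a..c} g + integral {c..c + \<delta>} g = integral {a..c + \<delta>} g"
    using c(2) \<delta> antimono_integrable_on[OF g]
    by (intro Henstock_Kurzweil_Integration.integral_combine) simp_all
  with Suc.IH lower[of c] upper[of c] antimono_integral_bounds[OF g, of \<delta> c] \<delta>
  show ?case
    unfolding c(1) c_def[symmetric] by (simp add: abs_le_iff algebra_simps)
qed simp

lemma dyadically_bracketed_increment_eq_integral:
  fixes g F :: "real \<Rightarrow> real"
  assumes g: "antimono g" and g01: "\<And>t. 0 \<le> g t \<and> g t \<le> 1"
    and lower: "\<And>q c. (1 / 2 ^ q) * g (c + 1 / 2 ^ q) \<le> F (c + 1 / 2 ^ q) - F c"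
    and upper: "\<And>q c. F (c + 1 / 2 ^ q) - F c \<le> (1 / 2 ^ q) * g c"
  shows "F (a + 2 ^ P) - F a = integral {a..a + 2 ^ P} g"
proof -
  define d where "d = F (a + 2 ^ P) - F a - integral {a..a + 2 ^ P} g"
  have d: "\<bar>d\<bar> \<le> (1 / 2) ^ q" for q :: nat
  proof -
    have steps: "real (2 ^ (P + q)) * (1 / 2 ^ q) = (2::real) ^ P"
      by (simp add: power_add)
    have "\<bar>d\<bar> \<le> (1 / 2 ^ q) * (g a - g (a + 2 ^ P))"
      using bracketed_increment_integral_error[OF g _ lower[where q = q] upper[where q = q], where a = a and k = "2 ^ (P + q)"]
      unfolding steps d_def by simp
    also have "\<dots> \<le> (1 / 2 ^ q) * 1"
      using g01[of a] g01[of "a + 2 ^ P"] by (intro mult_left_mono) simp_all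
    finally show ?thesis by (simp add: power_one_over)
  qed
  have "d = 0"
  proof (rule ccontr)
    assume "d \<noteq> 0"
    then obtain q where "(1 / 2 :: real) ^ q < \<bar>d\<bar>"
      using real_arch_pow_inv[of "\<bar>d\<bar>" "1 / 2"] by auto
    with d[of q] show False by simp
  qed
  then show ?thesis by (simp add: d_def)
qed

lemma antimono_step_increment_le:
  fixes f :: "real \<Rightarrow> real"
  assumes dec: "\<And>r r'. r \<le> r' \<Longrightarrow> f (r' + \<delta>) - f r' \<le> f (r + \<delta>) - f r" and "0 \<le> \<delta>"
  shows "f (r + real k * \<delta>) - f r \<le> real k * (f (r + \<delta>) - f r)"
proof (induction k)
  case (Suc k)
  have "f (r + real k * \<delta> + \<delta>) - f (r + real k * \<delta>) \<le> f (r + \<delta>) - f r"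
    using dec[of r "r + real k * \<delta>"] assms(2) by simp
  with Suc show ?case by (simp add: algebra_simps)
qed simp

lemma antimono_step_increment_ge:
  fixes f :: "real \<Rightarrow> real"
  assumes dec: "\<And>r r'. r \<le> r' \<Longrightarrow> f (r' + \<delta>) - f r' \<le> f (r + \<delta>) - f r" and "0 \<le> \<delta>"
  shows "real k * (f b - f (b - \<delta>)) \<le> f b - f (b - real k * \<delta>)"
proof (induction k)
  case (Suc k)
  have "f (b - \<delta> + \<delta>) - f (b - \<delta>) \<le> f (b - real k * \<delta> - \<delta> + \<delta>) - f (b - real k * \<delta> - \<delta>)"
    using dec[of "b - real k * \<delta> - \<delta>" "b - \<delta>"] assms(2) by simp
  with Suc show ?case by (simp add: algebra_simps)
qed simp

lemma antimono_choquet_integral: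
  fixes g :: "real \<Rightarrow> real"
  assumes g: "antimono g" and l: "0 \<le> l"
    and above: "\<And>t. l < t \<Longrightarrow> g t = 0" and below: "\<And>t. t \<le> - l \<Longrightarrow> g t = 1"
  shows "integral {0..} g + integral {..0} (\<lambda>t. g t - 1) = integral {- l..l} g - l"
proof -
  have "(\<lambda>t. if t \<in> {..l} then g t else 0) = g"
    using above by (auto simp: fun_eq_iff not_le)
  then have "integral {0..} g = integral ({..l} \<inter> {0..}) g"
    using integral_restrict_Int[of "{0..}" "{..l}" g] by simp
  also have "{..l} \<inter> {0..} = {0..l}" by auto
  finally have pos: "integral {0..} g = integral {0..l} g" .
  have "(\<lambda>t. if t \<in> {- l..} then g t - 1 else 0) = (\<lambda>t. g t - 1)"
    using below by (auto simp: fun_eq_iff not_le)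
  then have "integral {..0} (\<lambda>t. g t - 1) = integral ({- l..} \<inter> {..0}) (\<lambda>t. g t - 1)"
    using integral_restrict_Int[of "{..0}" "{- l..}" "\<lambda>t. g t - 1"] by simp
  also have "{- l..} \<inter> {..0} = {- l..0}" by auto
  also have "integral {- l..0} (\<lambda>t. g t - 1) = integral {- l..0} g - integral {- l..0} (\<lambda>t. 1)"
    by (rule integral_diff[OF antimono_integrable_on[OF g] integrable_const_ivl])
  finally have neg: "integral {..0} (\<lambda>t. g t - 1) = integral {- l..0} g - l"
    using l by simp
  have "integral {- l..0} g + integral {0..l} g = integral {- l..l} g"
    using l antimono_integrable_on[OF g] by (intro Henstock_Kurzweil_Integration.integral_combine) simp_all
  with pos neg show ?thesis by simp
qed

section \<open>The representing capacity\<close>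

locale choquet_representation =
  fixes e :: "'a::{ordered_real_vector,lattice}" and N :: "'a set" and V :: "'a \<Rightarrow> real"
  assumes unit: "strong_unit e" and ideal: "order_ideal N" and closed: "uniformly_closed N"
    and normalized: "V_normalized e V" and monotone: "V_monotone V"
    and unit_additive: "unit_additive e V" and unit_modular: "unit_modular e V"
    and invariant: "N_invariant N V"
begin

abbreviation "K \<equiv> E_N e N"

definition trunc :: "'a \<Rightarrow> real \<Rightarrow> real" where
  "trunc x t = V (inf x (t *\<^sub>R e))"

definition slab :: "'a \<Rightarrow> real \<Rightarrow> real \<Rightarrow> 'a" where
  "slab y r h = sup (inf (y - r *\<^sub>R e) (h *\<^sub>R e)) 0"

definition upper_set :: "'a \<Rightarrow> real \<Rightarrow> ('a \<Rightarrow> real) set" where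
  "upper_set y r = {\<xi> \<in> K. r \<le> \<xi> y}"

definition slope :: "'a \<Rightarrow> real \<Rightarrow> nat \<Rightarrow> real" where
  "slope y r m = (trunc y (r + 1 / 2 ^ m) - trunc y r) * 2 ^ m"

text \<open>
  By the brackets \<open>trunc_increment_le_capacity\<close> and \<open>capacity_le_trunc_increment\<close> below,
  \<open>capacity (upper_set x t)\<close> is the derivative of \<open>trunc x\<close> at \<open>t\<close>.
\<close>

definition capacity :: "('a \<Rightarrow> real) set \<Rightarrow> real" where
  "capacity A = Sup ({0} \<union> {slope y r m | y r m. upper_set y r \<subseteq> A})"

lemma V_scaleR_unit: "V (l *\<^sub>R e) = l"
  using normalized by (simp add: V_normalized_def)

lemma V_mono: "x \<le> y \<Longrightarrow> V x \<le> V y"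
  using monotone by (simp add: V_monotone_def)

lemma V_zero: "V 0 = 0"
  using V_scaleR_unit[of 0] by simp

lemma V_invariant: "x - y \<in> N \<Longrightarrow> V x = V y"
  using invariant by (simp add: N_invariant_def)

lemmas scaleR_unit_mono = strong_unit_scaleR_mono[OF unit]

lemma V_add_scaleR_unit: "V (z + l *\<^sub>R e) = V z + l"
proof (cases "0 \<le> l")
  case True
  then show ?thesis
    using unit_additive by (simp add: unit_additive_def V_scaleR_unit)
next
  case False
  then have "V ((z + l *\<^sub>R e) + (- l) *\<^sub>R e) = V (z + l *\<^sub>R e) + V ((- l) *\<^sub>R e)"
    using unit_additive unfolding unit_additive_def by (metis neg_0_le_iff_le nle_le)
  then show ?thesis by (simp only: V_scaleR_unit) simp
qed

lemma trunc_increment: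
  assumes "0 \<le> h"
  shows "trunc y (r + h) - trunc y r = V (slab y r h)"
proof -
  define A where "A = inf y ((r + h) *\<^sub>R e)"
  have "r *\<^sub>R e \<le> (r + h) *\<^sub>R e"
    using assms by (intro scaleR_unit_mono) simp
  then have inf: "inf A (r *\<^sub>R e) = inf y (r *\<^sub>R e)"
    by (simp add: A_def inf_assoc inf_absorb2)
  have "slab y r h + r *\<^sub>R e = sup (inf (y - r *\<^sub>R e) (h *\<^sub>R e) + r *\<^sub>R e) (0 + r *\<^sub>R e)"
    unfolding slab_def by (rule riesz.add_sup_distrib_right)
  also have "inf (y - r *\<^sub>R e) (h *\<^sub>R e) + r *\<^sub>R e = inf (y - r *\<^sub>R e + r *\<^sub>R e) (h *\<^sub>R e + r *\<^sub>R e)"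
    by (rule riesz.add_inf_distrib_right)
  also have "\<dots> = A"
    by (simp add: A_def scaleR_add_left add.commute)
  finally have sup: "sup A (r *\<^sub>R e) = slab y r h + r *\<^sub>R e" by simp
  have "V (sup A (r *\<^sub>R e)) + V (inf A (r *\<^sub>R e)) = V A + r"
    using unit_modular by (simp add: unit_modular_def V_scaleR_unit)
  then show ?thesis
    unfolding sup inf V_add_scaleR_unit by (simp add: trunc_def A_def)
qed

lemma slab_nonneg: "0 \<le> slab y r h"
  by (simp add: slab_def)

lemma slab_le: "0 \<le> h \<Longrightarrow> slab y r h \<le> h *\<^sub>R e"
  using scaleR_unit_mono[of 0 h] by (simp add: slab_def)

lemma slab_antimono: "r \<le> r' \<Longrightarrow> slab y r' h \<le> slab y r h"
  unfolding slab_def using scaleR_unit_mono[of r r'] by (intro sup_mono inf_mono) simp_all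

lemma trunc_increment_bounds: "0 \<le> h \<Longrightarrow> 0 \<le> trunc y (r + h) - trunc y r \<and> trunc y (r + h) - trunc y r \<le> h"
  using V_mono[OF slab_nonneg, of y r h] V_mono[OF slab_le, of h y r]
  by (simp add: trunc_increment V_zero V_scaleR_unit)

lemma trunc_increment_antimono:
  "0 \<le> h \<Longrightarrow> r \<le> r' \<Longrightarrow> trunc y (r' + h) - trunc y r' \<le> trunc y (r + h) - trunc y r"
  by (simp add: trunc_increment V_mono slab_antimono)

lemma unital_riesz_hom_slab:
  assumes "unital_riesz_hom e \<xi>"
  shows "\<xi> (slab y r h) = max (min (\<xi> y - r) h) 0"
  using assms
  by (simp add: slab_def unital_riesz_hom_sup unital_riesz_hom_inf unital_riesz_hom_unit
      linear_diff[OF unital_riesz_hom_linear] linear_0[OF unital_riesz_hom_linear])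

lemma mem_idealI:
  "0 \<le> w \<Longrightarrow> (\<And>\<xi>. \<xi> \<in> K \<Longrightarrow> unital_riesz_hom e \<xi> \<Longrightarrow> \<xi> w \<le> 0) \<Longrightarrow> w \<in> N"
  by (rule uniformly_closed_ideal_memI[OF unit ideal closed])

text \<open>\<open>V\<close> of a slab only depends on the upper level set below it, because \<open>N\<close> is separated by \<open>K\<close>.\<close>

lemma V_slab_le:
  assumes h: "0 < h" and sub: "upper_set y r \<subseteq> upper_set x b"
  shows "V (slab y r h) \<le> V (slab x (b - h) h)"
proof -
  define w where "w = riesz.pprt (slab y r h - slab x (b - h) h)"
  have "w \<in> N"
    unfolding w_def
  proof (rule mem_idealI)
    fix \<xi> assume K: "\<xi> \<in> K" and hom: "unital_riesz_hom e \<xi>"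
    have "r \<le> \<xi> y \<Longrightarrow> b \<le> \<xi> x"
      using K sub by (auto simp: upper_set_def)
    with h show "\<xi> (riesz.pprt (slab y r h - slab x (b - h) h)) \<le> 0"
      by (cases "r \<le> \<xi> y") (auto simp: unital_riesz_hom_pprt[OF hom] unital_riesz_hom_slab[OF hom]
          linear_diff[OF unital_riesz_hom_linear[OF hom]])
  qed simp
  have "slab y r h \<le> slab x (b - h) h + w"
    using le_pprt[of "slab y r h - slab x (b - h) h"] unfolding w_def by (metis add.commute diff_le_eq)
  then have "V (slab y r h) \<le> V (slab x (b - h) h + w)"
    by (rule V_mono)
  also have "\<dots> = V (slab x (b - h) h)"
    using \<open>w \<in> N\<close> by (intro V_invariant) simp
  finally show ?thesis .
qed

lemma V_slab_upper_set_empty: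
  assumes "upper_set y r = {}"
  shows "V (slab y r h) = 0"
proof -
  have "slab y r h \<in> N"
  proof (rule mem_idealI[OF slab_nonneg])
    fix \<xi> assume "\<xi> \<in> K" "unital_riesz_hom e \<xi>"
    moreover from this have "\<xi> y < r"
      using assms by (auto simp: upper_set_def)
    ultimately show "\<xi> (slab y r h) \<le> 0"
      by (simp add: unital_riesz_hom_slab)
  qed
  then show ?thesis
    using V_invariant[of "slab y r h" 0] by (simp add: V_zero)
qed

lemma slope_bounds: "0 \<le> slope y r m \<and> slope y r m \<le> 1"
  using trunc_increment_bounds[of "1 / 2 ^ m" y r] by (simp add: slope_def field_simps)

lemma capacity_bdd: "bdd_above ({0} \<union> {slope y r m | y r m. upper_set y r \<subseteq> A})"
  using slope_bounds by (auto intro!: bdd_aboveI[where M = 1])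

lemma capacity_mono: "A \<subseteq> B \<Longrightarrow> capacity A \<le> capacity B"
  unfolding capacity_def by (rule cSup_subset_mono[OF _ capacity_bdd]) auto

lemma capacity_nonneg: "0 \<le> capacity A"
  unfolding capacity_def by (rule cSup_upper[OF _ capacity_bdd]) simp

lemma capacity_le_one: "capacity A \<le> 1"
  unfolding capacity_def using slope_bounds by (intro cSup_least) auto

lemma slope_le_capacity: "upper_set y r \<subseteq> A \<Longrightarrow> slope y r m \<le> capacity A"
  unfolding capacity_def by (rule cSup_upper[OF _ capacity_bdd]) auto

lemma capacity_empty: "capacity {} = 0"
proof (rule antisym[OF _ capacity_nonneg])
  have "slope y r m \<le> 0" if "upper_set y r \<subseteq> {}" for y r m
    using that V_slab_upper_set_empty[of y r] trunc_increment[of "1 / 2 ^ m" y r]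
    by (simp add: slope_def)
  then show "capacity {} \<le> 0"
    unfolding capacity_def by (intro cSup_least) auto
qed

lemma capacity_space: "capacity K = 1"
proof (rule antisym[OF capacity_le_one])
  have "upper_set e 0 = K"
    using E_N_subset_Delta DeltaD(3) by (fastforce simp: upper_set_def)
  moreover have "slope e 0 0 = 1"
    using strong_unit_nonneg[OF unit] by (simp add: slope_def trunc_def inf_absorb2 V_zero V_scaleR_unit[of 1, simplified])
  ultimately show "1 \<le> capacity K"
    using slope_le_capacity[of e 0 K 0] by simp
qed

lemma trunc_increment_le:
  assumes "0 < h" "upper_set y r \<subseteq> upper_set x b"
  shows "trunc y (r + h) - trunc y r \<le> trunc x b - trunc x (b - h)"
  using V_slab_le[OF assms] trunc_increment[of h y r] trunc_increment[of h x "b - h"] assms(1)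
  by simp

text \<open>
  Comparing dyadic slopes at different scales uses that the increments of \<open>trunc y\<close> decrease
  (\<open>trunc y\<close> is concave): coarser slopes of \<open>trunc y\<close> are smaller, finer slopes of \<open>trunc x\<close>
  ending at \<open>c + 1/2^q\<close> are larger.
\<close>

lemma slope_le_slope:
  assumes sub: "upper_set y r \<subseteq> upper_set x (c + 1 / 2 ^ q)"
  shows "slope y r m \<le> slope x c q"
proof (cases "m \<le> q")
  case True
  define k :: nat where "k = 2 ^ (q - m)"
  have k: "real k * (1 / 2 ^ q) = 1 / 2 ^ m" "2 ^ m * real k = (2::real) ^ q"
    using True by (simp_all add: k_def field_simps flip: power_add)
  have "trunc y (r + 1 / 2 ^ m) - trunc y r \<le> real k * (trunc y (r + 1 / 2 ^ q) - trunc y r)"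
    using antimono_step_increment_le[where f = "trunc y" and \<delta> = "1 / 2 ^ q" and r = r and k = k] trunc_increment_antimono k(1)
    by simp
  also have "\<dots> \<le> real k * (trunc x (c + 1 / 2 ^ q) - trunc x c)"
    using trunc_increment_le[OF _ sub, of "1 / 2 ^ q"] by (intro mult_left_mono) simp_all
  finally have "slope y r m \<le> real k * (trunc x (c + 1 / 2 ^ q) - trunc x c) * 2 ^ m"
    unfolding slope_def by (rule mult_right_mono) simp
  also have "\<dots> = slope x c q"
    unfolding slope_def using k(2) by (metis mult.assoc mult.commute)
  finally show ?thesis .
next
  case False
  define k :: nat where "k = 2 ^ (m - q)"
  define h :: real where "h = 1 / 2 ^ m"
  have k: "real k * h = 1 / 2 ^ q" "2 ^ q * real k = (2::real) ^ m" "0 < h"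
    using False by (simp_all add: k_def h_def field_simps flip: power_add)
  have "real k * (trunc y (r + h) - trunc y r) \<le> real k * (trunc x (c + 1 / 2 ^ q) - trunc x (c + 1 / 2 ^ q - h))"
    using trunc_increment_le[OF k(3) sub] by (intro mult_left_mono) simp_all
  also have "\<dots> \<le> trunc x (c + 1 / 2 ^ q) - trunc x (c + 1 / 2 ^ q - real k * h)"
    using antimono_step_increment_ge[where f = "trunc x" and \<delta> = h and b = "c + 1 / 2 ^ q" and k = k] trunc_increment_antimono k(3)
    by simp
  finally have "real k * (trunc y (r + h) - trunc y r) \<le> trunc x (c + 1 / 2 ^ q) - trunc x c"
    by (simp add: k(1))
  then have "real k * (trunc y (r + h) - trunc y r) * 2 ^ q \<le> slope x c q"
    unfolding slope_def by (rule mult_right_mono) simp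
  moreover have "real k * (trunc y (r + h) - trunc y r) * 2 ^ q = slope y r m"
    unfolding slope_def h_def[symmetric] using k(2) by (metis mult.assoc mult.commute)
  ultimately show ?thesis by simp
qed

lemma trunc_increment_le_capacity:
  "trunc x (c + 1 / 2 ^ q) - trunc x c \<le> (1 / 2 ^ q) * capacity (upper_set x c)"
  using slope_le_capacity[of x c "upper_set x c" q] by (simp add: slope_def field_simps)

lemma capacity_le_trunc_increment:
  "(1 / 2 ^ q) * capacity (upper_set x (c + 1 / 2 ^ q)) \<le> trunc x (c + 1 / 2 ^ q) - trunc x c"
proof -
  have "capacity (upper_set x (c + 1 / 2 ^ q)) \<le> slope x c q"
    unfolding capacity_def using slope_bounds slope_le_slope by (intro cSup_least) auto
  then show ?thesis by (simp add: slope_def field_simps)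
qed

lemma normalized_capacity: "normalized_capacity (borel_sub K) capacity"
  by (simp add: normalized_capacity_def borel_sub_def space_measure_of_conv
      capacity_empty capacity_space capacity_mono)

lemma antimono_capacity_upper_set: "antimono (\<lambda>t. capacity (upper_set x t))"
  by (intro antimonoI) (auto simp: upper_set_def intro!: capacity_mono)

lemma capacity_upper_set_out_of_range:
  assumes "- (b *\<^sub>R e) \<le> x" "x \<le> b *\<^sub>R e"
  shows "b < t \<Longrightarrow> capacity (upper_set x t) = 0" "t \<le> - b \<Longrightarrow> capacity (upper_set x t) = 1"
proof -
  have range: "- b \<le> \<xi> x" "\<xi> x \<le> b" if "\<xi> \<in> K" for \<xi>
    using Delta_bounds[OF _ assms] that E_N_subset_Delta by blast+
  show "b < t \<Longrightarrow> capacity (upper_set x t) = 0"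
  proof -
    assume "b < t"
    then have "upper_set x t = {}"
      using range(2) by (fastforce simp: upper_set_def)
    then show ?thesis by (simp add: capacity_empty)
  qed
  show "t \<le> - b \<Longrightarrow> capacity (upper_set x t) = 1"
  proof -
    assume "t \<le> - b"
    then have "upper_set x t = K"
      using range(1) by (fastforce simp: upper_set_def)
    then show ?thesis by (simp add: capacity_space)
  qed
qed

lemma V_eq_integral_capacity:
  assumes x: "- (2 ^ p *\<^sub>R e) \<le> x" "x \<le> 2 ^ p *\<^sub>R e"
  shows "V x = integral {- (2 ^ p) .. 2 ^ p} (\<lambda>t. capacity (upper_set x t)) - 2 ^ p"
proof -
  let ?b = "2 ^ p :: real"
  have "trunc x (- ?b + 2 ^ (p + 1)) - trunc x (- ?b)
    = integral {- ?b .. - ?b + 2 ^ (p + 1)} (\<lambda>t. capacity (upper_set x t))"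
    using capacity_nonneg capacity_le_one
    by (intro dyadically_bracketed_increment_eq_integral[OF antimono_capacity_upper_set]
        capacity_le_trunc_increment trunc_increment_le_capacity) simp
  moreover have "- ?b + 2 ^ (p + 1) = ?b"
    by simp
  moreover have "trunc x ?b = V x" "trunc x (- ?b) = - ?b"
    using x V_scaleR_unit[of "- ?b"] by (simp_all add: trunc_def inf_absorb1 inf_absorb2)
  ultimately show ?thesis
    by simp
qed

lemma V_eq_choquet: "V x = choquet (borel_sub K) capacity (\<lambda>\<xi>. \<xi> x)"
proof -
  obtain l where l: "- (l *\<^sub>R e) \<le> x" "x \<le> l *\<^sub>R e"
    using strong_unitD[OF unit] by blast
  obtain p :: nat where "l < 2 ^ p"
    using real_arch_pow[of 2 l] by auto
  then have "l *\<^sub>R e \<le> 2 ^ p *\<^sub>R e"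
    by (intro scaleR_unit_mono) simp
  then have x: "- (2 ^ p *\<^sub>R e) \<le> x" "x \<le> 2 ^ p *\<^sub>R e"
    using order_trans[OF _ l(1)] order_trans[OF l(2)] by simp_all
  have "V x = integral {- (2 ^ p) .. 2 ^ p} (\<lambda>t. capacity (upper_set x t)) - 2 ^ p"
    by (rule V_eq_integral_capacity[OF x])
  also have "\<dots> = integral {0..} (\<lambda>t. capacity (upper_set x t))
      + integral {..0} (\<lambda>t. capacity (upper_set x t) - 1)"
    using capacity_upper_set_out_of_range[OF x]
    by (intro antimono_choquet_integral[OF antimono_capacity_upper_set, symmetric]) simp_all
  also have "\<dots> = choquet (borel_sub K) capacity (\<lambda>\<xi>. \<xi> x)"
    by (simp add: choquet_def upper_set_def borel_sub_def space_measure_of_conv)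
  finally show ?thesis .
qed

end

theorem theorem2p3:
  fixes e :: "'a::{ordered_real_vector,lattice}"
    and N :: "'a set"
    and V :: "'a \<Rightarrow> real"
  assumes "archimedean_riesz TYPE('a)"
    and "strong_unit e"
    and "order_ideal N" and "N \<noteq> UNIV" and "uniformly_closed N"
    and "V_normalized e V" and "V_monotone V" and "unit_additive e V"
    and "unit_modular e V" and "N_invariant N V"
  shows "\<exists>\<nu>. normalized_capacity (borel_sub (E_N e N)) \<nu> \<and>
           (\<forall>x. V x = choquet (borel_sub (E_N e N)) \<nu> (\<lambda>\<xi>. \<xi> x))"
proof -
  interpret choquet_representation e N V
    using assms by unfold_locales
  show ?thesis
    using normalized_capacity V_eq_choquet by blast
qed

end
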